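(* Let $\{(Q^{m,n}_{ij})_{i,j\in\mathbb{N}}\}$ be a discrete time Markov process. Suppose there exist $k_0\in\mathbb{N}$ and a sequence $(\lambda_n)$ with $0<\lambda_n<1$ for all $n$, satisfying $\sum_{n}\lambda_n=\infty$ and $\sum_{j=1}^n\frac{\prod_{k=1}^n(1-\lambda_k)}{1-\lambda_j}\to0$ as $n\to\infty$, such that $Q^{n-1,n}_{ik_0}\ge\lambda_n$ for all $i\in\mathbb{N}$ and all $n$ (for which $Q^{n-1,n}$ is defined). Then the Markov process satisfies the ergodic principle, i.e. $\lim_{n\to\infty}|Q^{m,n}_{ik}-Q^{m,n}_{jk}|=0$ for every $i,j,k,m$.
   Context: $\mathbb{N}=\{1,2,\dots\}$. A matrix $(Q_{ij})_{i,j\in\mathbb{N}}$ is stochastic if $Q_{ij}\ge0$ and $\sum_jQ_{ij}=1$ for every $i$. A discrete time Markov process is a family of stochastic matrices $\{(Q^{m,n}_{ij})_{i,j\in\mathbb{N}}\}$ indexed by integer times $m<n$, satisfying the Kolmogorov–Chapman equation $Q^{m,l}_{ij}=\sum_{k=1}^\infty Q^{m,n}_{ik}Q^{n,l}_{kj}$ for all $m<n<l$ and all $i,j$. *)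

theory Defs
  imports "HOL-Analysis.Analysis"
begin

text \<open>States are the positive naturals {1,2,...}; times are integers.
  Q m n i j is the transition probability from state i at time m to state j at time n.\<close>

definition stochastic_matrix :: "(nat \<Rightarrow> nat \<Rightarrow> real) \<Rightarrow> bool" where
  "stochastic_matrix P \<longleftrightarrow>
     (\<forall>i\<ge>1. (\<forall>j\<ge>1. P i j \<ge> 0) \<and> ((\<lambda>j. P i j) has_sum 1) {1..})"

definition markov_process :: "(int \<Rightarrow> int \<Rightarrow> nat \<Rightarrow> nat \<Rightarrow> real) \<Rightarrow> bool" where
  "markov_process Q \<longleftrightarrow>
     (\<forall>m n. m < n \<longrightarrow> stochastic_matrix (Q m n)) \<and>
     (\<forall>m n l i j. m < n \<longrightarrow> n < l \<longrightarrow> i \<ge> 1 \<longrightarrow> j \<ge> 1 \<longrightarrow>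
        ((\<lambda>k. Q m n i k * Q n l k j) has_sum Q m l i j) {1..})"

definition ergodic_principle :: "(int \<Rightarrow> int \<Rightarrow> nat \<Rightarrow> nat \<Rightarrow> real) \<Rightarrow> bool" where
  "ergodic_principle Q \<longleftrightarrow>
     (\<forall>i j k m. i \<ge> 1 \<longrightarrow> j \<ge> 1 \<longrightarrow> k \<ge> 1 \<longrightarrow>
        ((\<lambda>n. \<bar>Q m n i k - Q m n j k\<bar>) \<longlongrightarrow> 0) at_top)"

end

theory Submission
  imports Defs
begin

(* At the step from time t - 1 to time t every row of the transition matrix puts mass at least
   lam t on the state k0, so averaging a function of the state against these rows shrinks its
   oscillation (the spread of its values) by the factor 1 - lam t. By Chapman-Kolmogorov,
   column k of Q m n is such an average of column k of Q (m + 1) n; backward induction on m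
   bounds its oscillation by the product of 1 - lam t over m < t < n, and this product tends
   to 0 because 1 - x \<le> exp (- x) and the series of the lam t diverges. *)

definition oscillation_le :: "(nat \<Rightarrow> real) \<Rightarrow> real \<Rightarrow> bool" where
  "oscillation_le f w \<longleftrightarrow> (\<exists>a. \<forall>l\<ge>1. a \<le> f l \<and> f l \<le> a + w)"

lemma oscillation_le_abs_diff:
  assumes "oscillation_le f w" "i \<ge> 1" "j \<ge> 1"
  shows "\<bar>f i - f j\<bar> \<le> w"
proof -
  obtain a where "\<forall>l\<ge>1. a \<le> f l \<and> f l \<le> a + w"
    using assms(1) unfolding oscillation_le_def by blast
  then have "a \<le> f i \<and> f i \<le> a + w" "a \<le> f j \<and> f j \<le> a + w"
    using assms(2,3) by auto
  then show ?thesis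
    by (auto simp: abs_le_iff)
qed

lemma stochastic_average_ge:
  fixes p f :: "nat \<Rightarrow> real"
  assumes p_nonneg: "\<forall>l\<ge>1. 0 \<le> p l" and p_sum: "(p has_sum 1) {1..}"
    and "k0 \<ge> 1" and "0 \<le> lam" and "lam \<le> p k0"
    and v: "((\<lambda>l. p l * f l) has_sum v) {1..}" and f_ge: "\<forall>l\<ge>1. a \<le> f l"
  shows "lam * f k0 + (1 - lam) * a \<le> v"
proof -
  have "((\<lambda>l. p l * f l + - (a * p l)) has_sum (v + - (a * 1))) {1..}"
    by (intro has_sum_add[OF v] has_sum_uminusI has_sum_cmult_right[OF p_sum])
  then have centred: "((\<lambda>l. p l * (f l - a)) has_sum (v - a)) {1..}"
    by (simp add: algebra_simps)
  have "p k0 * (f k0 - a) \<le> v - a"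
    using finite_sum_le_has_sum[OF centred, of "{k0}"] assms(3) p_nonneg f_ge by simp
  moreover have "lam * (f k0 - a) \<le> p k0 * (f k0 - a)"
    using assms(3,5) f_ge by (intro mult_right_mono) auto
  ultimately show ?thesis
    by (simp add: algebra_simps)
qed

lemma oscillation_le_stochastic_average:
  assumes "stochastic_matrix P" and "oscillation_le f w" and "k0 \<ge> 1"
    and "0 \<le> lam" and "\<forall>i\<ge>1. lam \<le> P i k0"
    and "\<forall>i\<ge>1. ((\<lambda>l. P i l * f l) has_sum g i) {1..}"
  shows "oscillation_le g ((1 - lam) * w)"
proof -
  obtain a where a: "\<forall>l\<ge>1. a \<le> f l \<and> f l \<le> a + w"
    using assms(2) unfolding oscillation_le_def by blast
  define b where "b = lam * f k0 + (1 - lam) * a"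
  have "b \<le> g i \<and> g i \<le> b + (1 - lam) * w" if "i \<ge> 1" for i
  proof
    have row: "\<forall>l\<ge>1. 0 \<le> P i l" "(P i has_sum 1) {1..}"
      using assms(1) that unfolding stochastic_matrix_def by auto
    show "b \<le> g i"
      unfolding b_def using assms(3-6) that a
      by (intro stochastic_average_ge[OF row]) auto
    \<comment> \<open>the upper bound is the lower bound for -f\<close>
    have "lam * (- f k0) + (1 - lam) * (- (a + w)) \<le> - g i"
      using assms(3-6) that a has_sum_uminusI[where f="\<lambda>l. P i l * f l"]
      by (intro stochastic_average_ge[OF row]) auto
    then show "g i \<le> b + (1 - lam) * w"
      unfolding b_def by (simp add: algebra_simps)
  qed
  then show ?thesis
    unfolding oscillation_le_def by blast
qed

lemma oscillation_le_stochastic_column: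
  assumes "stochastic_matrix P" and "k \<ge> 1"
  shows "oscillation_le (\<lambda>l. P l k) 1"
proof -
  have "0 \<le> P l k \<and> P l k \<le> 1" if "l \<ge> 1" for l
  proof -
    have row: "\<forall>j\<ge>1. 0 \<le> P l j" "(P l has_sum 1) {1..}"
      using assms(1) that unfolding stochastic_matrix_def by auto
    then show ?thesis
      using finite_sum_le_has_sum[OF row(2), of "{k}"] assms(2) by auto
  qed
  then show ?thesis
    unfolding oscillation_le_def by (intro exI[of _ 0]) simp
qed

lemma markov_column_oscillation_le:
  fixes Q :: "int \<Rightarrow> int \<Rightarrow> nat \<Rightarrow> nat \<Rightarrow> real" and mu :: "int \<Rightarrow> real"
  assumes Q: "markov_process Q" and "k0 \<ge> 1" and "k \<ge> 1"
    and mu_nonneg: "\<And>t. 0 \<le> mu t"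
    and mu_le_column: "\<And>t i. i \<ge> 1 \<Longrightarrow> mu t \<le> Q (t - 1) t i k0"
    and "m < n"
  shows "oscillation_le (\<lambda>l. Q m n l k) (\<Prod>t\<in>{m<..<n}. 1 - mu t)"
proof -
  have "m \<le> n - 1" using \<open>m < n\<close> by simp
  then show ?thesis
  proof (induction m rule: int_le_induct)
    case base
    have "{n - 1<..<n} = {}"
      by auto
    then show ?case
      using Q \<open>k \<ge> 1\<close> oscillation_le_stochastic_column[of "Q (n - 1) n" k]
      unfolding markov_process_def by simp
  next
    case (step m)
    have "oscillation_le (\<lambda>i. Q (m - 1) n i k) ((1 - mu m) * (\<Prod>t\<in>{m<..<n}. 1 - mu t))"
    proof (rule oscillation_le_stochastic_average[OF _ step.IH \<open>k0 \<ge> 1\<close>])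
      show "stochastic_matrix (Q (m - 1) m)"
        using Q unfolding markov_process_def by simp
      show "0 \<le> mu m" "\<forall>i\<ge>1. mu m \<le> Q (m - 1) m i k0"
        using mu_nonneg mu_le_column by auto
      show "\<forall>i\<ge>1. ((\<lambda>l. Q (m - 1) m i l * Q m n l k) has_sum Q (m - 1) n i k) {1..}"
        using Q step.hyps \<open>k \<ge> 1\<close> unfolding markov_process_def by auto
    qed
    moreover have "{m - 1<..<n} = insert m {m<..<n}"
      using step.hyps by auto
    ultimately show ?case
      by simp
  qed
qed

lemma prod_one_minus_le_exp_neg_sum:
  fixes f :: "'a \<Rightarrow> real"
  assumes "finite A" and "\<And>x. x \<in> A \<Longrightarrow> f x \<le> 1"
  shows "(\<Prod>x\<in>A. 1 - f x) \<le> exp (- (\<Sum>x\<in>A. f x))"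
proof -
  have "(\<Prod>x\<in>A. 1 - f x) \<le> (\<Prod>x\<in>A. exp (- f x))"
    using assms by (intro prod_mono) (auto simp: add.commute[of 1] exp_ge_add_one_self[of "- _", simplified])
  then show ?thesis
    using \<open>finite A\<close> by (simp add: exp_sum flip: sum_negf)
qed

lemma prod_one_minus_tendsto_zero:
  fixes mu :: "int \<Rightarrow> real"
  assumes mu: "\<And>t. 0 \<le> mu t \<and> mu t \<le> 1"
    and diverges: "filterlim (\<lambda>n. \<Sum>t\<in>{0<..<n}. mu t) at_top at_top"
  shows "((\<lambda>n. \<Prod>t\<in>{m<..<n}. 1 - mu t) \<longlongrightarrow> 0) at_top"
proof (rule tendsto_sandwich[OF _ _ tendsto_const])
  have "(\<Sum>t\<in>{0<..<n}. mu t) \<le> (\<Sum>t\<in>{0<..m}. mu t) + (\<Sum>t\<in>{m<..<n}. mu t)" for n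
  proof -
    have "(\<Sum>t\<in>{0<..<n}. mu t) \<le> (\<Sum>t\<in>{0<..m} \<union> {m<..<n}. mu t)"
      using mu by (intro sum_mono2) auto
    also have "\<dots> = (\<Sum>t\<in>{0<..m}. mu t) + (\<Sum>t\<in>{m<..<n}. mu t)"
      by (rule sum.union_disjoint) auto
    finally show ?thesis .
  qed
  then have "filterlim (\<lambda>n. \<Sum>t\<in>{m<..<n}. mu t) at_top at_top"
    using filterlim_tendsto_add_at_top[OF tendsto_const diverges, of "- (\<Sum>t\<in>{0<..m}. mu t)"]
    by (rule_tac filterlim_at_top_mono) (auto simp: algebra_simps)
  then show "((\<lambda>n. exp (- (\<Sum>t\<in>{m<..<n}. mu t))) \<longlongrightarrow> 0) at_top"
    by (intro filterlim_compose[OF exp_at_bot]) (simp add: filterlim_uminus_at_top[symmetric])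
  show "\<forall>\<^sub>F n in at_top. 0 \<le> (\<Prod>t\<in>{m<..<n}. 1 - mu t)"
    using mu by (intro always_eventually allI prod_nonneg) auto
  show "\<forall>\<^sub>F n in at_top. (\<Prod>t\<in>{m<..<n}. 1 - mu t) \<le> exp (- (\<Sum>t\<in>{m<..<n}. mu t))"
    using mu by (intro always_eventually allI prod_one_minus_le_exp_neg_sum) auto
qed

lemma sum_zero_extension_at_top:
  fixes lam :: "nat \<Rightarrow> real"
  assumes "filterlim (\<lambda>N. \<Sum>n=1..N. lam n) at_top sequentially"
  shows "filterlim (\<lambda>n::int. \<Sum>t\<in>{0<..<n}. if 1 \<le> t then lam (nat t) else 0) at_top at_top"
proof -
  have nat_pred: "filterlim (\<lambda>n::int. nat (n - 1)) at_top at_top"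
    unfolding filterlim_at_top
  proof
    fix N :: nat
    show "\<forall>\<^sub>F n in at_top. N \<le> nat (n - 1)"
      using eventually_ge_at_top[of "int N + 1"] by eventually_elim (simp add: le_nat_iff)
  qed
  have "(\<Sum>t\<in>{0<..<n}. if 1 \<le> t then lam (nat t) else 0) = (\<Sum>r=1..nat (n - 1). lam r)" for n
  proof -
    have "{0<..<n} = int ` {1..nat (n - 1)}"
      by (auto simp: image_int_atLeastAtMost)
    then show ?thesis
      by (simp add: sum.reindex)
  qed
  moreover have "filterlim (\<lambda>n. \<Sum>r=1..nat (n - 1). lam r) at_top at_top"
    by (rule filterlim_compose[OF assms nat_pred])
  ultimately show ?thesis
    by presburger
qed

theorem theorem3p3:
  fixes Q :: "int \<Rightarrow> int \<Rightarrow> nat \<Rightarrow> nat \<Rightarrow> real"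
    and lam :: "nat \<Rightarrow> real"
    and k0 :: nat
  assumes "markov_process Q"
    and "k0 \<ge> 1"
    and "\<And>n. n \<ge> 1 \<Longrightarrow> 0 < lam n \<and> lam n < 1"
    and "filterlim (\<lambda>N. \<Sum>n=1..N. lam n) at_top sequentially"
    and "(\<lambda>n. \<Sum>j=1..n. (\<Prod>k=1..n. 1 - lam k) / (1 - lam j)) \<longlonglongrightarrow> 0"
    and "\<And>n i. n \<ge> 1 \<Longrightarrow> i \<ge> 1 \<Longrightarrow> Q (int n - 1) (int n) i k0 \<ge> lam n"
  shows "ergodic_principle Q"
  unfolding ergodic_principle_def
proof (intro allI impI)
  fix i j k :: nat and m :: int
  assume "i \<ge> 1" "j \<ge> 1" "k \<ge> 1"
  \<comment> \<open>No lower bound is assumed at times t \<le> 0; there the step contributes the trivial factor 1.\<close>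
  define mu :: "int \<Rightarrow> real" where "mu = (\<lambda>t. if 1 \<le> t then lam (nat t) else 0)"
  have mu_bounds: "0 \<le> mu t \<and> mu t \<le> 1" for t
    using assms(3)[of "nat t"] unfolding mu_def by fastforce
  have mu_le_column: "mu t \<le> Q (t - 1) t i' k0" if "i' \<ge> 1" for t i'
    using assms(1,2) assms(6)[of "nat t" i'] that
    unfolding mu_def markov_process_def stochastic_matrix_def by auto
  have "filterlim (\<lambda>n. \<Sum>t\<in>{0<..<n}. mu t) at_top at_top"
    unfolding mu_def by (rule sum_zero_extension_at_top[OF assms(4)])
  then have prod_tendsto: "((\<lambda>n. \<Prod>t\<in>{m<..<n}. 1 - mu t) \<longlongrightarrow> 0) at_top"
    using mu_bounds by (rule prod_one_minus_tendsto_zero[rotated])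
  have "\<forall>\<^sub>F n in at_top. \<bar>Q m n i k - Q m n j k\<bar> \<le> (\<Prod>t\<in>{m<..<n}. 1 - mu t)"
    using eventually_gt_at_top[of m]
  proof eventually_elim
    case (elim n)
    then show ?case
      using markov_column_oscillation_le[OF assms(1,2) \<open>k \<ge> 1\<close> _ mu_le_column] mu_bounds
      by (intro oscillation_le_abs_diff[OF _ \<open>i \<ge> 1\<close> \<open>j \<ge> 1\<close>]) auto
  qed
  then show "((\<lambda>n. \<bar>Q m n i k - Q m n j k\<bar>) \<longlongrightarrow> 0) at_top"
    by (intro tendsto_sandwich[OF always_eventually _ tendsto_const prod_tendsto]) simp_all
qed

end
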